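(* Let $\mathscr{O}\subset\mathbb{R}^n$ be non-empty and compact, $\lambda>0$ and $\mathfrak{c}>0$. Define $$R_{\mathfrak{c}}(x,\mathscr{O}):=\inf_{\alpha}\int_0^\infty\Big(\tfrac12|\alpha(s)|^2+\tfrac{\mathfrak{c}}2\operatorname{dist}(y^\alpha_x(s),\mathscr{O})^2\Big)e^{-\lambda s}\,ds,$$ where the infimum is over all measurable essentially bounded $\alpha:[0,\infty)\to\mathbb{R}^n$ and $y^\alpha_x(t)=x+\int_0^t\alpha(s)\,ds$. Then for all $x\in\mathbb{R}^n$, $$R_{\mathfrak{c}}(x,\mathscr{O})=C\,\operatorname{dist}(x,\mathscr{O})^2,\qquad C=\frac{-\lambda+\sqrt{\lambda^2+4\mathfrak{c}}}{4}>0.$$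
   Context: $\operatorname{dist}(x,\mathscr{O})=\min_{z\in\mathscr{O}}|x-z|$ denotes the Euclidean distance to the set. *)

theory Defs
  imports "HOL-Analysis.Analysis"
begin

definition admissible_control :: "(real \<Rightarrow> 'a::euclidean_space) \<Rightarrow> bool" where
  "admissible_control \<alpha> \<longleftrightarrow>
     set_borel_measurable lebesgue {0..} \<alpha> \<and>
     (\<exists>B. AE s in lebesgue. s \<in> {0..} \<longrightarrow> norm (\<alpha> s) \<le> B)"

definition traj :: "'a::euclidean_space \<Rightarrow> (real \<Rightarrow> 'a) \<Rightarrow> real \<Rightarrow> 'a" where
  "traj x \<alpha> t = x + (LINT s:{0..t}|lebesgue. \<alpha> s)"

definition cost :: "real \<Rightarrow> real \<Rightarrow> 'a::euclidean_space set \<Rightarrow> 'a \<Rightarrow> (real \<Rightarrow> 'a) \<Rightarrow> ennreal" where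
  "cost c lam Obs x \<alpha> =
     (\<integral>\<^sup>+ s. ennreal ((1/2 * (norm (\<alpha> s))\<^sup>2 + c/2 * (infdist (traj x \<alpha> s) Obs)\<^sup>2) * exp (- lam * s))
             * indicator {0..} s \<partial>lebesgue)"

definition R_val :: "real \<Rightarrow> real \<Rightarrow> 'a::euclidean_space \<Rightarrow> 'a set \<Rightarrow> ennreal" where
  "R_val c lam x Obs = (INF \<alpha> \<in> {\<alpha>. admissible_control \<alpha>}. cost c lam Obs x \<alpha>)"

end

theory Submission
  imports Defs "HOL-Real_Asymp.Real_Asymp"
begin

(* Let d be the distance to O and V(y) = C d(y)^2, where C is the positive root of
   4 C^2 + 2 lam C = c. Steering towards a nearest point p with the feedback
   alpha = -2C (y - p) gives y(s) = p + e^{-2Cs} (x - p), whose cost is exactly V(x).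
   Conversely, along a bounded control r(t) = d(y(t)) is Lipschitz with |r'| <= |alpha|, and
   completing the square, 2 C r |a| + lam C r^2 <= |a|^2/2 + c r^2/2, makes
   V(y(t)) e^{-lam t} + (cost accumulated on [0,t]) nondecreasing in t. As r need not be
   differentiable, this is checked on steps of length h up to an O(h^2) error and summed over
   finer and finer partitions. Since V(y(T)) grows at most quadratically in T, the discount
   kills it as T -> infinity, leaving V(x) <= cost. *)

lemma quadratic_value_HJB_inequality:
  fixes C lam c r u :: real
  assumes "c = 4*C^2 + 2*lam*C"
  shows "2*C*r*u + lam*C*r^2 \<le> u^2/2 + c/2*r^2"
proof -
  have "u^2/2 + c/2*r^2 - (2*C*r*u + lam*C*r^2) = (u - 2*C*r)^2/2"
    using assms by (simp add: power2_eq_square algebra_simps)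
  moreover have "0 \<le> (u - 2*C*r)^2/2" by simp
  ultimately show ?thesis by linarith
qed

lemma positive_root_quadratic:
  fixes lam c :: real
  assumes "c > 0"
  defines "C \<equiv> (- lam + sqrt (lam^2 + 4*c)) / 4"
  shows "C > 0" and "c = 4*C^2 + 2*lam*C"
proof -
  define S where "S = sqrt (lam^2 + 4*c)"
  have S2: "S^2 = lam^2 + 4*c"
    unfolding S_def using assms(1) by (auto intro: add_nonneg_nonneg)
  have "\<bar>lam\<bar> < S"
    unfolding S_def using assms(1) real_sqrt_less_mono[of "lam^2" "lam^2 + 4*c"] by simp
  then show "C > 0" unfolding C_def S_def[symmetric] by simp
  have "4*C^2 + 2*lam*C = (S^2 - lam^2)/4"
    unfolding C_def S_def[symmetric] by (simp add: power2_eq_square field_simps)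
  then show "c = 4*C^2 + 2*lam*C" using S2 by simp
qed

lemma le_endpoint_of_quadratic_defect:
  fixes g :: "real \<Rightarrow> real"
  assumes "a < b" "0 < \<delta>"
    and step: "\<And>t h. a \<le> t \<Longrightarrow> 0 < h \<Longrightarrow> h \<le> \<delta> \<Longrightarrow> t + h \<le> b \<Longrightarrow> g t \<le> g (t + h) + K * h^2"
  shows "g a \<le> g b"
proof -
  have telescope: "g a \<le> g (a + real k * h) + real k * K * h^2"
    if h: "0 < h" "h \<le> \<delta>" and k: "a + real k * h \<le> b" for k h
    using k
  proof (induction k)
    case (Suc k)
    have b: "a + real k * h + h \<le> b" using Suc.prems by (simp add: algebra_simps)
    then have "g (a + real k * h) \<le> g (a + real k * h + h) + K * h^2"
      using step h by simp
    moreover have "g a \<le> g (a + real k * h) + real k * K * h^2"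
      using Suc.IH b h by simp
    ultimately show ?case by (simp add: algebra_simps)
  qed simp
  define N where "N = nat \<lceil>(b - a) / \<delta>\<rceil> + 1"
  have "g a \<le> g b + K * (b - a)^2 / real n" if n: "n \<ge> N" for n
  proof -
    have n0: "real n > 0" using n unfolding N_def by simp
    have "(b - a) / \<delta> < real n" using n unfolding N_def by linarith
    then have h: "0 < (b - a) / real n" "(b - a) / real n \<le> \<delta>"
      using assms(1,2) n0 by (auto simp: field_simps)
    have "g a \<le> g (a + real n * ((b - a) / real n)) + real n * K * ((b - a) / real n)^2"
      by (rule telescope[OF h]) (use n0 in simp)
    then show ?thesis using n0 by (simp add: power2_eq_square)
  qed
  moreover have "(\<lambda>n. g b + K * (b - a)^2 / real n) \<longlonglongrightarrow> g b + 0"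
    by (intro tendsto_add tendsto_const lim_const_over_n)
  ultimately show ?thesis
    using LIMSEQ_le_const[of _ "g b + 0" "g a"] by auto
qed

(* One step of the verification argument for C r^2 e^{-lam t}: r1, r2 are the distances at
   the two ends of the step, A bounds the path length in between, w is the discount at the end. *)
lemma quadratic_value_increment:
  fixes C lam h M A B r1 r2 w :: real
  assumes "0 < C" "0 \<le> lam" "0 \<le> h" "lam * h \<le> 1"
    and r: "0 \<le> r1" "r1 \<le> M" "0 \<le> r2" and A: "\<bar>r1 - r2\<bar> \<le> A" "A \<le> B * h"
    and w: "0 \<le> w" "w \<le> 1"
  shows "C*r1^2*(w*exp(lam*h))
           \<le> C*r2^2*w + w*(2*C*r1*A + lam*C*r1^2*h) + (C*B^2 + C*M^2*lam^2)*h^2"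
proof -
  have A0: "0 \<le> A" using A by linarith
  have "r1^2 - r2^2 = (r1 - r2)*(r1 + r2)" by (simp add: power2_eq_square algebra_simps)
  also have "\<dots> \<le> A*(r1 + r2)" using A r by (intro mult_right_mono) auto
  also have "\<dots> \<le> A*(2*r1 + A)" using A A0 by (intro mult_left_mono) auto
  finally have "C*(r1^2 - r2^2) \<le> C*(A*(2*r1 + A))"
    using assms(1) by (simp add: mult_left_mono)
  then have sq: "C*(r1^2 - r2^2) \<le> 2*C*r1*A + C*A^2"
    by (simp add: algebra_simps power2_eq_square)
  have "exp (lam*h) - 1 \<le> lam*h + (lam*h)^2"
    using exp_bound[of "lam*h"] assms(2-4) by simp
  then have "C*r1^2*(exp (lam*h) - 1) \<le> C*r1^2*(lam*h + (lam*h)^2)"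
    using assms(1) by (intro mult_left_mono) auto
  then have ex: "C*r1^2*(exp (lam*h) - 1) \<le> lam*C*r1^2*h + C*r1^2*lam^2*h^2"
    by (simp add: algebra_simps)
  have "A^2 \<le> B^2*h^2" using power_mono[OF A(2) A0, of 2] by (simp add: power_mult_distrib)
  moreover have "r1^2 \<le> M^2" using r by (intro power_mono) auto
  ultimately have "C*A^2 + C*(r1^2*(lam*h)^2) \<le> C*(B^2*h^2) + C*(M^2*(lam*h)^2)"
    using assms(1) by (intro add_mono mult_left_mono mult_right_mono) auto
  then have err: "C*A^2 + C*r1^2*lam^2*h^2 \<le> (C*B^2 + C*M^2*lam^2)*h^2"
    by (simp add: algebra_simps)
  have "C*r1^2*(w*exp(lam*h)) - C*r2^2*w = w*(C*(r1^2 - r2^2) + C*r1^2*(exp (lam*h) - 1))"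
    by (simp add: algebra_simps)
  also have "\<dots> \<le> w*(2*C*r1*A + lam*C*r1^2*h + (C*A^2 + C*r1^2*lam^2*h^2))"
    using sq ex w by (intro mult_left_mono) auto
  also have "\<dots> = w*(2*C*r1*A + lam*C*r1^2*h) + w*(C*A^2 + C*r1^2*lam^2*h^2)"
    by (simp add: distrib_left)
  also have "\<dots> \<le> w*(2*C*r1*A + lam*C*r1^2*h) + (C*A^2 + C*r1^2*lam^2*h^2)"
    using w assms(1) by (intro add_left_mono mult_left_le_one_le) auto
  finally show ?thesis using err by linarith
qed

lemma square_ge_of_abs_diff_le:
  fixes r \<rho> \<delta> :: real
  assumes "0 \<le> r" "\<bar>r - \<rho>\<bar> \<le> \<delta>"
  shows "r * (r - 2*\<delta>) \<le> \<rho>^2"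
proof -
  have "0 \<le> r * (\<rho> - r + \<delta>)" using assms by simp
  moreover have "\<rho>^2 - r * (r - 2*\<delta>) = (\<rho> - r)^2 + 2 * (r * (\<rho> - r + \<delta>))"
    by (simp add: power2_eq_square algebra_simps)
  ultimately show ?thesis using zero_le_power2[of "\<rho> - r"] by linarith
qed

lemma set_integrable_Icc_bounded:
  fixes f :: "real \<Rightarrow> 'b::euclidean_space"
  assumes "f \<in> borel_measurable lebesgue" and "\<And>s. s \<in> {a..b} \<Longrightarrow> norm (f s) \<le> M"
  shows "set_integrable lebesgue {a..b} f"
  unfolding set_integrable_def
  by (rule integrableI_bounded_set_indicator[where B=M]) (use assms in \<open>auto simp: emeasure_lborel_Icc_eq\<close>)

definition running_cost :: "real \<Rightarrow> real \<Rightarrow> 'a::euclidean_space set \<Rightarrow> 'a \<Rightarrow> (real \<Rightarrow> 'a) \<Rightarrow> real \<Rightarrow> real"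
  where "running_cost c lam Obs x \<alpha> s =
    (1/2 * (norm (\<alpha> s))\<^sup>2 + c/2 * (infdist (traj x \<alpha> s) Obs)\<^sup>2) * exp (- lam * s)"

lemma cost_eq_nn_integral_running_cost:
  "cost c lam Obs x \<alpha> = (\<integral>\<^sup>+ s. ennreal (running_cost c lam Obs x \<alpha> s) * indicator {0..} s \<partial>lebesgue)"
  unfolding cost_def running_cost_def ..

lemma running_cost_nonneg: "0 \<le> c \<Longrightarrow> 0 \<le> running_cost c lam Obs x \<alpha> s"
  unfolding running_cost_def by (intro mult_nonneg_nonneg add_nonneg_nonneg) auto

locale bounded_control =
  fixes \<beta> :: "real \<Rightarrow> 'a::euclidean_space" and B :: real
  assumes measurable_control [measurable]: "\<beta> \<in> borel_measurable lebesgue"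
    and norm_control_le: "\<And>s. norm (\<beta> s) \<le> B"
begin

lemma bound_nonneg: "0 \<le> B"
  using norm_control_le[of 0] norm_ge_zero order_trans by blast

lemma control_integrable_on: "\<beta> integrable_on {a..b}"
  by (rule set_lebesgue_integral_eq_integral(1), rule set_integrable_Icc_bounded)
     (use norm_control_le in auto)

lemma norm_control_integrable_on: "(\<lambda>s. norm (\<beta> s)) integrable_on {a..b}"
  by (rule set_lebesgue_integral_eq_integral(1), rule set_integrable_Icc_bounded[where M=B])
     (use norm_control_le in auto)

lemma integral_norm_control_le: "a \<le> b \<Longrightarrow> integral {a..b} (\<lambda>s. norm (\<beta> s)) \<le> B * (b - a)"
  using integral_le[OF norm_control_integrable_on integrable_const_ivl[of B a b]] norm_control_le
  by (simp add: mult.commute)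

lemma traj_eq_integral: "traj x \<beta> t = x + integral {0..t} \<beta>"
  unfolding traj_def
  by (metis set_lebesgue_integral_eq_integral(2) set_integrable_Icc_bounded measurable_control norm_control_le)

lemma dist_traj_le_integral:
  assumes "0 \<le> a" "a \<le> b"
  shows "dist (traj x \<beta> a) (traj x \<beta> b) \<le> integral {a..b} (\<lambda>s. norm (\<beta> s))"
proof -
  have "traj x \<beta> b - traj x \<beta> a = integral {a..b} \<beta>"
    using Henstock_Kurzweil_Integration.integral_combine[OF assms control_integrable_on]
    unfolding traj_eq_integral by (simp add: algebra_simps)
  then show ?thesis
    by (metis dist_commute dist_norm integral_norm_bound_integral control_integrable_on
        norm_control_integrable_on order_refl)
qed

lemma dist_traj_le:
  assumes "0 \<le> a" "a \<le> b"
  shows "dist (traj x \<beta> a) (traj x \<beta> b) \<le> B * (b - a)"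
  using order_trans[OF dist_traj_le_integral[OF assms] integral_norm_control_le[OF assms(2)]] .

lemma infdist_traj_diff_le:
  assumes "0 \<le> a" "a \<le> b"
  shows "\<bar>infdist (traj x \<beta> a) Obs - infdist (traj x \<beta> b) Obs\<bar> \<le> B * (b - a)"
  using infdist_triangle_abs dist_traj_le[OF assms] by (rule order_trans)

lemma continuous_on_traj: "continuous_on {0..} (traj x \<beta>)"
proof (rule lipschitz_on_continuous_on[where L=B], unfold lipschitz_on_def, intro conjI ballI)
  show "dist (traj x \<beta> s) (traj x \<beta> t) \<le> B * dist s t" if "s \<in> {0..}" "t \<in> {0..}" for s t
    using that dist_traj_le[of s t x] dist_traj_le[of t s x]
    by (cases "s \<le> t") (auto simp: dist_real_def dist_commute)
qed (use bound_nonneg in auto)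

lemma running_cost_integrable_on:
  assumes "0 \<le> lam" "0 \<le> a"
  shows "running_cost c lam Obs x \<beta> integrable_on {a..b}"
proof -
  have "(\<lambda>s. (norm (\<beta> s))\<^sup>2 * exp (- lam * s)) integrable_on {a..b}"
  proof (rule set_lebesgue_integral_eq_integral(1), rule set_integrable_Icc_bounded[where M="B^2"])
    show "norm ((norm (\<beta> s))\<^sup>2 * exp (- lam * s)) \<le> B^2" if "s \<in> {a..b}" for s
    proof -
      have "exp (- lam * s) \<le> 1" using assms that by simp
      moreover have "(norm (\<beta> s))\<^sup>2 \<le> B^2" using norm_control_le[of s] by (intro power_mono) auto
      ultimately have "(norm (\<beta> s))\<^sup>2 * exp (- lam * s) \<le> B^2 * 1"
        by (intro mult_mono) auto
      then show ?thesis by simp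
    qed
    have [measurable]: "(\<lambda>s. exp (- lam * s)) \<in> borel_measurable lebesgue"
      by (rule measurable_completion) simp
    show "(\<lambda>s. (norm (\<beta> s))\<^sup>2 * exp (- lam * s)) \<in> borel_measurable lebesgue"
      by measurable
  qed
  moreover have "continuous_on {a..b} (\<lambda>s. (infdist (traj x \<beta> s) Obs)\<^sup>2 * exp (- lam * s))"
    using assms(2) by (intro continuous_intros continuous_on_subset[OF continuous_on_traj]) auto
  then have "(\<lambda>s. (infdist (traj x \<beta> s) Obs)\<^sup>2 * exp (- lam * s)) integrable_on {a..b}"
    by (rule integrable_continuous_interval)
  ultimately have "(\<lambda>s. 1/2 * ((norm (\<beta> s))\<^sup>2 * exp (- lam * s))
      + c/2 * ((infdist (traj x \<beta> s) Obs)\<^sup>2 * exp (- lam * s))) integrable_on {a..b}"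
    by (intro integrable_add integrable_on_mult_right)
  then show ?thesis unfolding running_cost_def by (simp add: algebra_simps)
qed

lemma integral_running_cost_le_cost:
  assumes "0 \<le> c" "0 \<le> lam"
  shows "ennreal (integral {0..T} (running_cost c lam Obs x \<beta>)) \<le> cost c lam Obs x \<beta>"
proof -
  let ?F = "running_cost c lam Obs x \<beta>"
  have "(?F has_integral integral {0..T} ?F) {0..T}"
    using running_cost_integrable_on[OF assms(2), of 0] by blast
  then have "((\<lambda>s. if s \<in> {0..T} then ?F s else 0) has_integral integral {0..T} ?F) UNIV"
    by (subst has_integral_restrict_UNIV)
  then have "ennreal (integral {0..T} ?F) = (\<integral>\<^sup>+ s. ennreal (if s \<in> {0..T} then ?F s else 0) \<partial>lebesgue)"
    by (subst (asm) has_integral_iff_nn_integral_lebesgue) (auto simp: running_cost_nonneg assms(1))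
  also have "\<dots> \<le> (\<integral>\<^sup>+ s. ennreal (?F s) * indicator {0..} s \<partial>lebesgue)"
    by (intro nn_integral_mono) (auto split: split_indicator)
  finally show ?thesis unfolding cost_eq_nn_integral_running_cost .
qed

(* The HJB inequality with the distance frozen at time t; unfreezing it on [t, t + h] costs c r B h. *)
lemma running_cost_ge_frozen:
  fixes x :: 'a and Obs :: "'a set"
  assumes c: "c = 4*C^2 + 2*lam*C" and "0 \<le> c" "0 \<le> lam" and s: "0 \<le> t" "t \<le> s" "s \<le> t + h"
  defines "r \<equiv> infdist (traj x \<beta> t) Obs"
  shows "exp (- lam * (t + h)) * (2*C*r*norm (\<beta> s) + lam*C*r^2 - c*r*B*h)
           \<le> running_cost c lam Obs x \<beta> s"
proof -
  define \<rho> where "\<rho> = infdist (traj x \<beta> s) Obs"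
  have "\<bar>r - \<rho>\<bar> \<le> B * (s - t)"
    using infdist_traj_diff_le[of t s] s unfolding r_def \<rho>_def by auto
  also have "\<dots> \<le> B * h" using bound_nonneg s by (intro mult_left_mono) auto
  finally have "r * (r - 2*(B*h)) \<le> \<rho>^2"
    by (rule square_ge_of_abs_diff_le[rotated]) (simp add: r_def infdist_nonneg)
  then have "c/2 * (r * (r - 2*(B*h))) \<le> c/2 * \<rho>^2"
    using assms(2) by (intro mult_left_mono) auto
  with quadratic_value_HJB_inequality[OF c, of r "norm (\<beta> s)"]
  have "2*C*r*norm (\<beta> s) + lam*C*r^2 - c*r*B*h \<le> (norm (\<beta> s))\<^sup>2/2 + c/2 * \<rho>^2"
    by (simp add: algebra_simps power2_eq_square)
  then have "exp (- lam * (t + h)) * (2*C*r*norm (\<beta> s) + lam*C*r^2 - c*r*B*h)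
      \<le> exp (- lam * (t + h)) * ((norm (\<beta> s))\<^sup>2/2 + c/2 * \<rho>^2)"
    by (rule mult_left_mono) simp
  also have "\<dots> \<le> exp (- lam * s) * ((norm (\<beta> s))\<^sup>2/2 + c/2 * \<rho>^2)"
    using assms(2,3) s by (intro mult_right_mono) (auto intro: mult_left_mono)
  finally show ?thesis unfolding running_cost_def \<rho>_def by (simp add: mult.commute)
qed

lemma discounted_value_step:
  assumes C: "0 < C" and c: "c = 4*C^2 + 2*lam*C" and lam: "0 \<le> lam"
    and t: "0 \<le> t" and h: "0 < h" "lam * h \<le> 1" and M: "infdist (traj x \<beta> t) Obs \<le> M"
  shows "C * (infdist (traj x \<beta> t) Obs)\<^sup>2 * exp (- lam * t)
    \<le> C * (infdist (traj x \<beta> (t + h)) Obs)\<^sup>2 * exp (- lam * (t + h))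
      + integral {t..t + h} (running_cost c lam Obs x \<beta>) + (c*M*B + C*B^2 + C*M^2*lam^2) * h^2"
proof -
  define r where "r s = infdist (traj x \<beta> s) Obs" for s
  define A where "A = integral {t..t + h} (\<lambda>s. norm (\<beta> s))"
  define w where "w = exp (- lam * (t + h))"
  define k where "k = lam*C*(r t)\<^sup>2 - c*r t*B*h"
  have c0: "0 \<le> c" using c C lam by simp
  have r0: "0 \<le> r s" for s unfolding r_def by (rule infdist_nonneg)
  have w: "0 \<le> w" "w \<le> 1" using lam t h unfolding w_def by auto
  have A: "\<bar>r t - r (t + h)\<bar> \<le> A" "A \<le> B * h"
    using order_trans[OF infdist_triangle_abs dist_traj_le_integral[of t "t + h"]]
      integral_norm_control_le[of t "t + h"] t h
    unfolding r_def A_def by auto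
  have increment: "C * (r t)\<^sup>2 * (w * exp (lam * h)) \<le> C * (r (t + h))\<^sup>2 * w
      + w * (2*C*r t*A + lam*C*(r t)\<^sup>2*h) + (C*B^2 + C*M^2*lam^2) * h^2"
    using quadratic_value_increment[OF C lam _ h(2) r0 _ r0 A w] M h unfolding r_def by simp
  have "((\<lambda>s. k) has_integral k*h) {t..t + h}"
    using has_integral_const_real[of k t "t + h"] h by (simp add: mult.commute)
  then have "((\<lambda>s. w * (2*C*r t*norm (\<beta> s) + k)) has_integral w * (2*C*r t*A + k*h)) {t..t + h}"
    using norm_control_integrable_on[of t "t + h"] unfolding A_def
    by (intro has_integral_mult_right has_integral_add) auto
  moreover have "w * (2*C*r t*norm (\<beta> s) + k) \<le> running_cost c lam Obs x \<beta> s"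
    if "s \<in> {t..t + h}" for s
    using running_cost_ge_frozen[OF c c0 lam t, where s=s and h=h and x=x and Obs=Obs] that
    unfolding w_def k_def r_def
    by (simp add: algebra_simps)
  ultimately have integral: "w * (2*C*r t*A + k*h) \<le> integral {t..t + h} (running_cost c lam Obs x \<beta>)"
    by (rule has_integral_le[OF _ integrable_integral[OF running_cost_integrable_on[OF lam t]]])
  have "(c*B*h*h) * r t \<le> (c*B*h*h) * M"
    using c0 M bound_nonneg h unfolding r_def by (intro mult_left_mono) auto
  then have "c*r t*B*h*h \<le> c*M*B*h^2" by (simp add: power2_eq_square mult_ac)
  moreover have "w * (c*r t*B*h*h) \<le> c*r t*B*h*h"
    using w c0 r0[of t] bound_nonneg h by (intro mult_left_le_one_le) auto
  moreover have "exp (- lam * t) = w * exp (lam * h)"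
    unfolding w_def by (simp add: mult_exp_exp algebra_simps)
  ultimately show ?thesis
    using increment integral unfolding k_def r_def w_def by (simp add: algebra_simps)
qed

lemma infdist_traj_le: "0 \<le> s \<Longrightarrow> infdist (traj x \<beta> s) Obs \<le> infdist x Obs + B * s"
  using infdist_traj_diff_le[of 0 s x Obs] by (simp add: traj_eq_integral)

lemma discounted_value_le_finite_horizon:
  assumes C: "0 < C" and c: "c = 4*C^2 + 2*lam*C" and lam: "0 < lam" and T: "0 < T"
  shows "C * (infdist x Obs)\<^sup>2 \<le> C * (infdist (traj x \<beta> T) Obs)\<^sup>2 * exp (- lam * T)
           + integral {0..T} (running_cost c lam Obs x \<beta>)"
proof -
  define r where "r s = infdist (traj x \<beta> s) Obs" for s
  define F where "F = running_cost c lam Obs x \<beta>"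
  define M where "M = infdist x Obs + B * T"
  define g where "g t = C * (r t)\<^sup>2 * exp (- lam * t) + integral {0..t} F" for t
  have "g t \<le> g (t + h) + (c*M*B + C*B^2 + C*M^2*lam^2) * h^2"
    if t: "0 \<le> t" and h: "0 < h" "h \<le> 1/lam" "t + h \<le> T" for t h
  proof -
    have "B * t \<le> B * T" using bound_nonneg h by (intro mult_left_mono) auto
    then have "r t \<le> M" using infdist_traj_le[OF t, of x Obs] unfolding r_def M_def by linarith
    moreover have "lam * h \<le> 1" using h lam by (simp add: field_simps)
    ultimately have "C * (r t)\<^sup>2 * exp (- lam * t) \<le> C * (r (t + h))\<^sup>2 * exp (- lam * (t + h))
        + integral {t..t + h} F + (c*M*B + C*B^2 + C*M^2*lam^2) * h^2"
      using discounted_value_step[OF C c less_imp_le[OF lam] t h(1)] unfolding r_def F_def by simp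
    moreover have "integral {0..t} F + integral {t..t + h} F = integral {0..t + h} F"
      using t h lam unfolding F_def
      by (intro Henstock_Kurzweil_Integration.integral_combine running_cost_integrable_on) auto
    ultimately show ?thesis unfolding g_def by linarith
  qed
  then have "g 0 \<le> g T"
    using le_endpoint_of_quadratic_defect[of 0 T "1/lam" g] T lam by auto
  then show ?thesis unfolding g_def r_def F_def by (simp add: traj_eq_integral)
qed

lemma discounted_value_le_cost:
  assumes C: "0 < C" and c: "c = 4*C^2 + 2*lam*C" and lam: "0 < lam"
  shows "ennreal (C * (infdist x Obs)\<^sup>2) \<le> cost c lam Obs x \<beta>"
proof (cases "cost c lam Obs x \<beta>" rule: ennreal_cases)
  case (real v)
  define d where "d = infdist x Obs"
  define K where "K = d + B"
  have c0: "0 \<le> c" using c C lam by simp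
  have "\<forall>\<^sub>F T in at_top. C * d\<^sup>2 \<le> C * K\<^sup>2 * ((1 + T)\<^sup>2 * exp (- lam * T)) + v"
    using eventually_gt_at_top[of 0]
  proof eventually_elim
    case (elim T)
    have "0 \<le> T * d" using elim unfolding d_def by (simp add: infdist_nonneg)
    then have "infdist (traj x \<beta> T) Obs \<le> K * (1 + T)"
      using infdist_traj_le[of T x Obs] elim bound_nonneg unfolding K_def d_def
      by (simp add: algebra_simps)
    then have "(infdist (traj x \<beta> T) Obs)\<^sup>2 \<le> (K * (1 + T))\<^sup>2"
      by (intro power_mono) (auto simp: infdist_nonneg)
    then have "C * (infdist (traj x \<beta> T) Obs)\<^sup>2 * exp (- lam * T)
        \<le> C * K\<^sup>2 * ((1 + T)\<^sup>2 * exp (- lam * T))"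
      using C by (simp add: power_mult_distrib mult_ac)
    moreover have "integral {0..T} (running_cost c lam Obs x \<beta>) \<le> v"
      using integral_running_cost_le_cost[OF c0 less_imp_le[OF lam], where T=T and x=x and Obs=Obs]
        real by simp
    ultimately show ?case
      using discounted_value_le_finite_horizon[OF C c lam elim, of x Obs] unfolding d_def by linarith
  qed
  moreover have "((\<lambda>T. (1 + T)\<^sup>2 * exp (- lam * T)) \<longlongrightarrow> 0) at_top"
    using lam by real_asymp
  then have "((\<lambda>T. C * K\<^sup>2 * ((1 + T)\<^sup>2 * exp (- lam * T)) + v) \<longlongrightarrow> C * K\<^sup>2 * 0 + v) at_top"
    by (intro tendsto_intros)
  ultimately have "C * d\<^sup>2 \<le> v"
    using tendsto_le[OF trivial_limit_at_top_linorder _ tendsto_const] by fastforce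
  then show ?thesis using real unfolding d_def by simp
qed simp

end

lemma traj_exponential_control:
  assumes "0 \<le> t"
  shows "traj x (\<lambda>s. - (k * exp (- k * s)) *\<^sub>R v) t = x - v + exp (- k * t) *\<^sub>R v"
proof -
  let ?\<alpha> = "\<lambda>s. - (k * exp (- k * s)) *\<^sub>R v"
  have "((\<lambda>s. exp (- k * s) *\<^sub>R v) has_vector_derivative ?\<alpha> s) (at s within {0..t})" for s
    by (auto intro!: derivative_eq_intros)
  then have "(?\<alpha> has_integral exp (- k * t) *\<^sub>R v - exp (- k * 0) *\<^sub>R v) {0..t}"
    by (intro fundamental_theorem_of_calculus[OF assms])
  then have "(?\<alpha> has_integral exp (- k * t) *\<^sub>R v - v) {0..t}"
    by simp
  then have "integral {0..t} ?\<alpha> = exp (- k * t) *\<^sub>R v - v"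
    by (rule integral_unique)
  moreover have "set_integrable lebesgue {0..t} ?\<alpha>"
    by (intro absolutely_integrable_continuous_real continuous_intros)
  ultimately show ?thesis
    unfolding traj_def by (simp add: set_lebesgue_integral_eq_integral(2))
qed

lemma admissible_exponential_control:
  assumes "0 \<le> k"
  shows "admissible_control (\<lambda>s. - (k * exp (- k * s)) *\<^sub>R v)"
  unfolding admissible_control_def
proof
  have "(\<lambda>s. indicator {0..} s *\<^sub>R (- (k * exp (- k * s)) *\<^sub>R v)) \<in> borel_measurable lborel"
    by measurable
  then show "set_borel_measurable lebesgue {0..} (\<lambda>s. - (k * exp (- k * s)) *\<^sub>R v)"
    unfolding set_borel_measurable_def by (rule measurable_completion)
  have "norm (- (k * exp (- k * s)) *\<^sub>R v) \<le> k * norm v" if "0 \<le> s" for s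
    using mult_right_mono[OF mult_right_le_one_le[of k "exp (- k * s)"] norm_ge_zero[of v]] assms that
    by simp
  then show "\<exists>B. AE s in lebesgue. s \<in> {0..} \<longrightarrow> norm (- (k * exp (- k * s)) *\<^sub>R v) \<le> B"
    by (intro exI AE_I2) auto
qed

lemma cost_exponential_control_le:
  assumes k: "0 \<le> k" and lam: "0 < lam" and c: "0 \<le> c" and p: "p \<in> Obs"
  shows "cost c lam Obs x (\<lambda>s. - (k * exp (- k * s)) *\<^sub>R (x - p))
           \<le> ennreal ((k^2 + c) / (2 * (2*k + lam)) * (dist x p)\<^sup>2)"
proof -
  define \<alpha> where "\<alpha> s = - (k * exp (- k * s)) *\<^sub>R (x - p)" for s
  define Q where "Q = (k^2 + c) / 2 * (dist x p)\<^sup>2"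
  have Q: "0 \<le> Q" unfolding Q_def using c by simp
  define a where "a = 2*k + lam"
  have a: "0 < a" unfolding a_def using k lam by simp
  have running_cost_le: "running_cost c lam Obs x \<alpha> s \<le> Q * exp (- a * s)" if s: "0 \<le> s" for s
  proof -
    define E where "E = exp (- k * s)"
    have "infdist (traj x \<alpha> s) Obs \<le> dist (traj x \<alpha> s) p"
      by (rule infdist_le[OF p])
    also have "\<dots> = E * dist x p"
      unfolding \<alpha>_def traj_exponential_control[OF s] E_def by (simp add: dist_norm)
    finally have "(infdist (traj x \<alpha> s) Obs)\<^sup>2 \<le> (E * dist x p)\<^sup>2"
      by (rule power_mono) (simp add: infdist_nonneg)
    then have "c/2 * (infdist (traj x \<alpha> s) Obs)\<^sup>2 \<le> c/2 * (E * dist x p)\<^sup>2"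
      by (rule mult_left_mono) (use c in simp)
    moreover have "(norm (\<alpha> s))\<^sup>2 = k^2 * E\<^sup>2 * (dist x p)\<^sup>2"
      unfolding \<alpha>_def E_def using k by (simp add: power_mult_distrib dist_norm)
    moreover have "1/2 * (k^2 * E\<^sup>2 * (dist x p)\<^sup>2) + c/2 * (E * dist x p)\<^sup>2 = Q * E\<^sup>2"
      unfolding Q_def by (simp add: algebra_simps)
    ultimately have "1/2 * (norm (\<alpha> s))\<^sup>2 + c/2 * (infdist (traj x \<alpha> s) Obs)\<^sup>2 \<le> Q * E\<^sup>2"
      by linarith
    then have "running_cost c lam Obs x \<alpha> s \<le> Q * E\<^sup>2 * exp (- lam * s)"
      unfolding running_cost_def by (rule mult_right_mono) simp
    also have "Q * E\<^sup>2 * exp (- lam * s) = Q * exp (- k * s + - k * s + - lam * s)"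
      unfolding E_def power2_eq_square by (simp only: mult.assoc mult_exp_exp add.assoc)
    also have "- k * s + - k * s + - lam * s = - a * s"
      unfolding a_def by (simp add: algebra_simps)
    finally show ?thesis .
  qed
  have "((\<lambda>s. Q * exp (- a * s)) has_integral Q / a) {0..}"
    using has_integral_mult_right[OF has_integral_exp_minus_to_infinity[OF a, of 0], of Q] by simp
  then have "((\<lambda>s. if s \<in> {0..} then Q * exp (- a * s) else 0) has_integral Q / a) UNIV"
    by (subst has_integral_restrict_UNIV)
  then have integral: "(\<integral>\<^sup>+ s. ennreal (if s \<in> {0..} then Q * exp (- a * s) else 0) \<partial>lebesgue)
      = ennreal (Q / a)"
    using Q by (subst (asm) has_integral_iff_nn_integral_lebesgue) auto
  have "ennreal (running_cost c lam Obs x \<alpha> s) * indicator {0..} s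
      \<le> ennreal (if s \<in> {0..} then Q * exp (- a * s) else 0)" for s
    using running_cost_le[of s] by (auto intro: ennreal_leI)
  then have "cost c lam Obs x \<alpha> \<le> ennreal (Q / a)"
    unfolding cost_eq_nn_integral_running_cost integral[symmetric] by (rule nn_integral_mono)
  moreover have "Q / a = (k^2 + c) / (2 * (2*k + lam)) * (dist x p)\<^sup>2"
    unfolding Q_def a_def by simp
  ultimately show ?thesis unfolding \<alpha>_def by simp
qed

lemma admissible_control_cost_eq_bounded:
  assumes "admissible_control \<alpha>"
  obtains \<beta> B where "bounded_control \<beta> B" and "cost c lam Obs x \<alpha> = cost c lam Obs x \<beta>"
proof -
  obtain B where meas: "set_borel_measurable lebesgue {0..} \<alpha>"
    and bound: "AE s in lebesgue. s \<in> {0..} \<longrightarrow> norm (\<alpha> s) \<le> B"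
    using assms unfolding admissible_control_def by blast
  define v where "v s = indicator {0..} s *\<^sub>R \<alpha> s" for s
  have [measurable]: "v \<in> borel_measurable lebesgue"
    using meas unfolding set_borel_measurable_def v_def by simp
  define \<beta> where "\<beta> s = (if norm (v s) \<le> B then v s else 0)" for s
  have [measurable]: "\<beta> \<in> borel_measurable lebesgue" unfolding \<beta>_def by measurable
  have "bounded_control \<beta> (max B 0)"
    by unfold_locales (auto simp: \<beta>_def)
  have ae: "AE s in lebesgue. \<beta> s = v s"
    using bound by eventually_elim (auto simp: \<beta>_def v_def split: split_indicator)
  have "traj x \<alpha> t = traj x \<beta> t" for t
  proof -
    have "(LINT s:{0..t}|lebesgue. \<alpha> s) = (LINT s:{0..t}|lebesgue. v s)"
      unfolding set_lebesgue_integral_def v_def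
      by (intro Bochner_Integration.integral_cong) (auto split: split_indicator)
    also have "\<dots> = (LINT s:{0..t}|lebesgue. \<beta> s)"
      using ae by (intro set_lebesgue_integral_cong_AE) auto
    finally show ?thesis unfolding traj_def by simp
  qed
  then have "cost c lam Obs x \<alpha> = cost c lam Obs x \<beta>"
    unfolding cost_def using ae
    by (intro nn_integral_cong_AE) (auto simp: v_def split: split_indicator)
  with \<open>bounded_control \<beta> (max B 0)\<close> show ?thesis by (rule that)
qed

lemma R_val_le_discounted_value:
  fixes Obs :: "'a::euclidean_space set"
  assumes "Obs \<noteq> {}" "closed Obs" and C: "0 < C" and c: "c = 4*C^2 + 2*lam*C" and lam: "0 < lam"
  shows "R_val c lam x Obs \<le> ennreal (C * (infdist x Obs)\<^sup>2)"
proof -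
  obtain p where p: "p \<in> Obs" "infdist x Obs = dist x p"
    using infdist_attains_inf[OF assms(2,1)] by blast
  \<comment> \<open>k = 2C is the optimal feedback gain: it minimises (k^2 + c) / (2 (2k + lam)).\<close>
  have "(2*C)^2 + c = C * (2 * (2*(2*C) + lam))"
    unfolding c by (simp add: power2_eq_square algebra_simps)
  then have "((2*C)^2 + c) / (2 * (2*(2*C) + lam)) = C"
    using C lam by (simp add: field_simps)
  then have "cost c lam Obs x (\<lambda>s. - (2*C * exp (- (2*C) * s)) *\<^sub>R (x - p)) \<le> ennreal (C * (infdist x Obs)\<^sup>2)"
    using cost_exponential_control_le[of "2*C" lam c p Obs x] C lam c p by simp
  moreover have "admissible_control (\<lambda>s. - (2*C * exp (- (2*C) * s)) *\<^sub>R (x - p))"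
    using C by (intro admissible_exponential_control) simp
  ultimately show ?thesis
    unfolding R_val_def by (blast intro: INF_lower2)
qed

lemma discounted_value_le_R_val:
  fixes Obs :: "'a::euclidean_space set"
  assumes C: "0 < C" and c: "c = 4*C^2 + 2*lam*C" and lam: "0 < lam"
  shows "ennreal (C * (infdist x Obs)\<^sup>2) \<le> R_val c lam x Obs"
  unfolding R_val_def
proof (rule INF_greatest)
  fix \<alpha> :: "real \<Rightarrow> 'a" assume "\<alpha> \<in> {\<alpha>. admissible_control \<alpha>}"
  then obtain \<beta> B where "bounded_control \<beta> B" and "cost c lam Obs x \<alpha> = cost c lam Obs x \<beta>"
    using admissible_control_cost_eq_bounded by blast
  then show "ennreal (C * (infdist x Obs)\<^sup>2) \<le> cost c lam Obs x \<alpha>"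
    using bounded_control.discounted_value_le_cost[OF _ C c lam] by simp
qed

theorem mainTheorem7:
  fixes Obs :: "'a::euclidean_space set" and lam c :: real
  assumes "Obs \<noteq> {}" and "compact Obs" and "lam > 0" and "c > 0"
  shows "(- lam + sqrt (lam\<^sup>2 + 4 * c)) / 4 > 0 \<and>
         (\<forall>x. R_val c lam x Obs = ennreal ((- lam + sqrt (lam\<^sup>2 + 4 * c)) / 4 * (infdist x Obs)\<^sup>2))"
proof -
  define C where "C = (- lam + sqrt (lam\<^sup>2 + 4 * c)) / 4"
  have C: "0 < C" and c: "c = 4*C^2 + 2*lam*C"
    using positive_root_quadratic[OF \<open>c > 0\<close>, of lam] unfolding C_def by auto
  have "R_val c lam x Obs = ennreal (C * (infdist x Obs)\<^sup>2)" for x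
    using R_val_le_discounted_value[OF \<open>Obs \<noteq> {}\<close> compact_imp_closed[OF \<open>compact Obs\<close>] C c \<open>lam > 0\<close>]
      discounted_value_le_R_val[OF C c \<open>lam > 0\<close>]
    by (rule antisym)
  with C show ?thesis unfolding C_def by blast
qed

end
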